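(* For the $N$-relay 1-2-1 diamond network with relays operating in HD, writing $\ell_i=\ell_{i,0}$ and $r_i=\ell_{N+1,i}$, $\mathsf{C}_{\rm cs,iid}$ (HD states) equals the optimal value of the linear program in variables $\lambda_{\ell_i},\lambda_{r_i}$ ($i\in[1:N]$): $$\max\sum_{i=1}^N\lambda_{\ell_i}\ell_i\ \text{ s.t. }\ \lambda_{\ell_i}\ell_i=\lambda_{r_i}r_i\ \forall i;\quad \sum_{i=1}^N\lambda_{\ell_i}\le1;\quad\sum_{i=1}^N\lambda_{r_i}\le1;\quad \lambda_{\ell_i}+\lambda_{r_i}\le1\ \forall i;\quad \lambda_{\ell_i},\lambda_{r_i}\ge0\ \forall i.$$
   Context: Diamond network: nodes $[0:N+1]$, source $0$, destination $N+1$, relays $[1:N]$; the only links are $(0,i)$ and $(i,N+1)$ for $i\in[1:N]$, with positive capacities $\ell_{i,0}$ and $\ell_{N+1,i}$; all other $\ell_{j,i}=0$. HD network states: a state $s$ consists of sets $s_{i,t}\subseteq[1:N+1]\setminus\{i\}$ and $s_{i,r}\subseteq[0:N]\setminus\{i\}$, each of cardinality at most $1$, for $i\in[0:N+1]$, with $s_{0,r}=s_{N+1,t}=\emptyset$ and $|s_{i,t}|+|s_{i,r}|\le1$ for $i\in[1:N]$; $\mathcal S$ is the set of all such states. Link $(i,j)$ is active in $s$ if $j\in s_{i,t}$ and $i\in s_{j,r}$. $\mathsf{C}_{\rm cs,iid}=\max_{\lambda}\min_{\Omega}\sum_{i\in\Omega,\ j\in\Omega^c}\big(\sum_{s\in\mathcal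 S:\ (i,j)\text{ active in }s}\lambda_s\big)\ell_{j,i}$, maximum over probability vectors $(\lambda_s)_{s\in\mathcal S}$, minimum over $\Omega$ with $0\in\Omega\subseteq[0:N]$, $\Omega^c=[0:N+1]\setminus\Omega$. *)

theory Defs
  imports Complex_Main
begin

text \<open>Nodes are the naturals 0..N+1. A network state is a pair (st, sr) of functions
  giving, for each node i, the transmit set s_{i,t} and the receive set s_{i,r}.
  Outside [0:N+1] both are fixed to the empty set so that the state set is finite.\<close>

type_synonym hd_state = "(nat \<Rightarrow> nat set) \<times> (nat \<Rightarrow> nat set)"

definition hd_states :: "nat \<Rightarrow> hd_state set" where
  "hd_states N = {(st, sr).
     (\<forall>i. N + 1 < i \<longrightarrow> st i = {} \<and> sr i = {}) \<and>
     (\<forall>i\<in>{0..N+1}. st i \<subseteq> {1..N+1} - {i} \<and> sr i \<subseteq> {0..N} - {i}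
                    \<and> card (st i) \<le> 1 \<and> card (sr i) \<le> 1) \<and>
     sr 0 = {} \<and> st (N+1) = {} \<and>
     (\<forall>i\<in>{1..N}. card (st i) + card (sr i) \<le> 1)}"

definition link_active :: "hd_state \<Rightarrow> nat \<Rightarrow> nat \<Rightarrow> bool" where
  "link_active s i j \<longleftrightarrow> j \<in> fst s i \<and> i \<in> snd s j"

definition prob_vectors :: "nat \<Rightarrow> (hd_state \<Rightarrow> real) set" where
  "prob_vectors N = {lam. (\<forall>s\<in>hd_states N. lam s \<ge> 0) \<and> (\<Sum>s\<in>hd_states N. lam s) = 1}"

text \<open>Capacity convention: cap j i is \<ell>_{j,i}, the capacity of link from i to j.\<close>
definition cut_value :: "nat \<Rightarrow> (nat \<Rightarrow> nat \<Rightarrow> real) \<Rightarrow> (hd_state \<Rightarrow> real) \<Rightarrow> nat set \<Rightarrow> real" where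
  "cut_value N cap lam \<Omega> =
     (\<Sum>i\<in>\<Omega>. \<Sum>j\<in>{0..N+1} - \<Omega>.
        (\<Sum>s\<in>{s\<in>hd_states N. link_active s i j}. lam s) * cap j i)"

definition cuts :: "nat \<Rightarrow> nat set set" where
  "cuts N = {\<Omega>. 0 \<in> \<Omega> \<and> \<Omega> \<subseteq> {0..N}}"

definition C_cs_iid :: "nat \<Rightarrow> (nat \<Rightarrow> nat \<Rightarrow> real) \<Rightarrow> real" where
  "C_cs_iid N cap = (SUP lam\<in>prob_vectors N. Min (cut_value N cap lam ` cuts N))"

definition diamond_cap :: "nat \<Rightarrow> (nat \<Rightarrow> real) \<Rightarrow> (nat \<Rightarrow> real) \<Rightarrow> nat \<Rightarrow> nat \<Rightarrow> real" where
  "diamond_cap N l r j i =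
     (if i = 0 \<and> j \<in> {1..N} then l j
      else if j = N + 1 \<and> i \<in> {1..N} then r i
      else 0)"

definition lp_feasible :: "nat \<Rightarrow> (nat \<Rightarrow> real) \<Rightarrow> (nat \<Rightarrow> real) \<Rightarrow> ((nat \<Rightarrow> real) \<times> (nat \<Rightarrow> real)) set" where
  "lp_feasible N l r = {(a, b).
     (\<forall>i\<in>{1..N}. a i * l i = b i * r i) \<and>
     (\<Sum>i=1..N. a i) \<le> 1 \<and> (\<Sum>i=1..N. b i) \<le> 1 \<and>
     (\<forall>i\<in>{1..N}. a i + b i \<le> 1) \<and>
     (\<forall>i\<in>{1..N}. a i \<ge> 0 \<and> b i \<ge> 0)}"

definition lp_value :: "nat \<Rightarrow> (nat \<Rightarrow> real) \<Rightarrow> (nat \<Rightarrow> real) \<Rightarrow> real" where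
  "lp_value N l r = (SUP ab\<in>lp_feasible N l r. \<Sum>i=1..N. fst ab i * l i)"

end

theory Submission
  imports Defs
begin

text \<open>Write x i and y i for the fractions of time in which the links from the source to relay i
  and from relay i to the destination are active. On the diamond a cut is determined by the set of
  relays on the source side, so the minimum cut of a schedule is the sum over the relays of
  min (x i * l i) (y i * r i). The half-duplex constraints give sum x \<le> 1, sum y \<le> 1 and
  x i + y i \<le> 1, so scaling each pair (x i, y i) down to the flow it carries yields a feasible point
  of the linear program with the same value. Conversely, every feasible point is realised by
  schedules in which the source serves one relay while another relay serves the destination: such a
  schedule is a nonnegative matrix with zero diagonal and prescribed row and column sums p and q,
  and it exists as soon as p u + q u never exceeds the total mass. That is proved by induction on
  the number of indices, merging the two indices with the smallest p + q.\<close>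

definition hollow_coupling :: "'a set \<Rightarrow> ('a \<Rightarrow> real) \<Rightarrow> ('a \<Rightarrow> real) \<Rightarrow> ('a \<Rightarrow> 'a \<Rightarrow> real) \<Rightarrow> bool" where
  "hollow_coupling X p q w \<longleftrightarrow>
     (\<forall>u v. 0 \<le> w u v) \<and> (\<forall>u. w u u = 0) \<and>
     (\<forall>u\<in>X. (\<Sum>v\<in>X. w u v) = p u) \<and> (\<forall>v\<in>X. (\<Sum>u\<in>X. w u v) = q v)"

lemma hollow_coupling_entry_zero:
  assumes "hollow_coupling X p q w" "finite X" "u \<in> X" "v \<in> X"
  shows "p u = 0 \<Longrightarrow> w u v = 0" and "q v = 0 \<Longrightarrow> w u v = 0"
  using assms sum_nonneg_eq_0_iff[of X "w u"] sum_nonneg_eq_0_iff[of X "\<lambda>u. w u v"]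
  unfolding hollow_coupling_def by auto

lemma hollow_coupling_three:
  fixes p q :: "'a \<Rightarrow> real"
  assumes "x \<noteq> y" "y \<noteq> z" "x \<noteq> z"
    and "\<forall>u\<in>{x, y, z}. 0 \<le> p u \<and> 0 \<le> q u"
    and "p x + p y + p z = T" "q x + q y + q z = T"
    and "\<forall>u\<in>{x, y, z}. p u + q u \<le> T"
  shows "\<exists>w. hollow_coupling {x, y, z} p q w"
proof -
  \<comment> \<open>The solutions form a one-parameter family, parametrised by the entry t at (x, y);
      this t is the least value keeping every entry nonnegative.\<close>
  define t where "t = max 0 (max (p x - q z) (p x + p y - q x - q z))"
  define w where "w u v =
      (if u = x \<and> v = y then t else if u = x \<and> v = z then p x - t
       else if u = y \<and> v = z then q z - p x + t else if u = y \<and> v = x then p y - q z + p x - t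
       else if u = z \<and> v = x then q x - p y + q z - p x + t else if u = z \<and> v = y then q y - t
       else 0)" for u v
  have "t \<ge> 0" "t \<ge> p x - q z" "t \<ge> p x + p y - q x - q z" "t \<le> p x" "t \<le> q y"
    "t \<le> p x + p y - q z"
    unfolding t_def using assms by auto
  then show ?thesis
    using assms by (intro exI[of _ w]) (auto simp: hollow_coupling_def w_def)
qed

lemma sum_merge_weights:
  fixes f :: "'a \<Rightarrow> real"
  assumes "finite X" "x \<in> X" "y \<in> X" "x \<noteq> y"
    and "\<And>v. v \<notin> {x, y} \<Longrightarrow> \<sigma> v = 1" and "(\<sigma> x + \<sigma> y) * f x = f x"
  shows "(\<Sum>v\<in>X. \<sigma> v * f (if v = y then x else v)) = (\<Sum>v\<in>X - {y}. f v)"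
proof -
  have "(\<Sum>v\<in>X. \<sigma> v * f (if v = y then x else v))
      = \<sigma> y * f x + \<sigma> x * f x + (\<Sum>v\<in>X - {y} - {x}. \<sigma> v * f (if v = y then x else v))"
    using assms by (simp add: sum.remove[of X y] sum.remove[of "X - {y}" x])
  also have "(\<Sum>v\<in>X - {y} - {x}. \<sigma> v * f (if v = y then x else v)) = (\<Sum>v\<in>X - {y} - {x}. f v)"
    using assms by (intro sum.cong) auto
  also have "(\<Sum>v\<in>X - {y}. f v) = f x + (\<Sum>v\<in>X - {y} - {x}. f v)"
    using assms by (simp add: sum.remove[of "X - {y}" x])
  ultimately show ?thesis
    using assms(6) by (simp add: algebra_simps)
qed

lemma hollow_coupling_split:
  fixes p q :: "'a \<Rightarrow> real"
  assumes fin: "finite X" and xy: "x \<in> X" "y \<in> X" "x \<noteq> y"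
    and nonneg: "0 \<le> p x" "0 \<le> p y" "0 \<le> q x" "0 \<le> q y"
    and merged: "hollow_coupling (X - {y}) (p(x := p x + p y)) (q(x := q x + q y)) w'"
  shows "\<exists>w. hollow_coupling X p q w"
proof -
  define \<phi> where "\<phi> u = (if u = y then x else u)" for u
  define \<rho> where "\<rho> u = (if u = x then p x / (p x + p y) else if u = y then p y / (p x + p y) else 1)" for u
  define \<sigma> where "\<sigma> u = (if u = x then q x / (q x + q y) else if u = y then q y / (q x + q y) else 1)" for u
  define w where "w u v = \<rho> u * \<sigma> v * w' (\<phi> u) (\<phi> v)" for u v
  have fin': "finite (X - {y})" and \<phi>X: "\<And>u. u \<in> X \<Longrightarrow> \<phi> u \<in> X - {y}"
    using fin xy by (auto simp: \<phi>_def)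
  have w'_rows: "\<And>u. u \<in> X - {y} \<Longrightarrow> (\<Sum>v\<in>X - {y}. w' u v) = (p(x := p x + p y)) u"
    and w'_cols: "\<And>v. v \<in> X - {y} \<Longrightarrow> (\<Sum>u\<in>X - {y}. w' u v) = (q(x := q x + q y)) v"
    using merged by (auto simp: hollow_coupling_def)
  have \<rho>_merge: "(\<rho> x + \<rho> y) * w' x k = w' x k" if "k \<in> X - {y}" for k
  proof (cases "p x + p y = 0")
    case True
    then show ?thesis
      using hollow_coupling_entry_zero(1)[OF merged fin' _ that, of x] xy by simp
  qed (use xy in \<open>simp add: \<rho>_def add_divide_distrib[symmetric]\<close>)
  have \<sigma>_merge: "(\<sigma> x + \<sigma> y) * w' k x = w' k x" if "k \<in> X - {y}" for k
  proof (cases "q x + q y = 0")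
    case True
    then show ?thesis
      using hollow_coupling_entry_zero(2)[OF merged fin' that, of x] xy by simp
  qed (use xy in \<open>simp add: \<sigma>_def add_divide_distrib[symmetric]\<close>)
  have rows: "(\<Sum>v\<in>X. w u v) = p u" if "u \<in> X" for u
  proof -
    have "(\<Sum>v\<in>X. w u v) = \<rho> u * (\<Sum>v\<in>X. \<sigma> v * w' (\<phi> u) (\<phi> v))"
      by (simp add: w_def sum_distrib_left mult.assoc)
    also have "(\<Sum>v\<in>X. \<sigma> v * w' (\<phi> u) (\<phi> v)) = (\<Sum>v\<in>X - {y}. w' (\<phi> u) v)"
      unfolding \<phi>_def
      by (rule sum_merge_weights[OF fin xy, of \<sigma> "w' (\<phi> u)", unfolded \<phi>_def])
        (use \<sigma>_merge[OF \<phi>X[OF that]] in \<open>auto simp: \<sigma>_def \<phi>_def\<close>)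
    also have "\<dots> = (p(x := p x + p y)) (\<phi> u)"
      using w'_rows \<phi>X[OF that] by auto
    finally show ?thesis
      using xy nonneg by (auto simp: \<rho>_def \<phi>_def)
  qed
  have cols: "(\<Sum>u\<in>X. w u v) = q v" if "v \<in> X" for v
  proof -
    have "(\<Sum>u\<in>X. w u v) = \<sigma> v * (\<Sum>u\<in>X. \<rho> u * (\<lambda>k. w' k (\<phi> v)) (\<phi> u))"
      by (simp add: w_def sum_distrib_left mult.assoc mult.left_commute)
    also have "(\<Sum>u\<in>X. \<rho> u * (\<lambda>k. w' k (\<phi> v)) (\<phi> u)) = (\<Sum>u\<in>X - {y}. w' u (\<phi> v))"
      unfolding \<phi>_def
      by (rule sum_merge_weights[OF fin xy, of \<rho> "\<lambda>k. w' k (\<phi> v)", unfolded \<phi>_def])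
        (use \<rho>_merge[OF \<phi>X[OF that]] in \<open>auto simp: \<rho>_def \<phi>_def\<close>)
    also have "\<dots> = (q(x := q x + q y)) (\<phi> v)"
      using w'_cols \<phi>X[OF that] by auto
    finally show ?thesis
      using xy nonneg by (auto simp: \<sigma>_def \<phi>_def)
  qed
  have "\<rho> u \<ge> 0" "\<sigma> u \<ge> 0" for u
    using nonneg by (auto simp: \<rho>_def \<sigma>_def)
  then have "\<forall>u v. 0 \<le> w u v"
    using merged by (auto simp: w_def hollow_coupling_def)
  moreover have "\<forall>u. w u u = 0"
    using merged by (simp add: w_def hollow_coupling_def)
  ultimately show ?thesis
    using rows cols unfolding hollow_coupling_def by blast
qed

lemma exists_pair_sum_le_half:
  fixes r :: "'a \<Rightarrow> real"
  assumes fin: "finite X" and card: "4 \<le> card X" and nonneg: "\<forall>u\<in>X. 0 \<le> r u"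
  shows "\<exists>x\<in>X. \<exists>y\<in>X. x \<noteq> y \<and> 2 * (r x + r y) \<le> sum r X"
proof -
  have "X \<noteq> {}"
    using card by auto
  then obtain x where x: "x \<in> X" "\<forall>u\<in>X. r x \<le> r u"
    using arg_min_if_finite[OF fin, of r] by (meson not_le)
  have "3 \<le> card (X - {x})"
    using fin card x by (simp add: card_Diff_singleton)
  then have "X - {x} \<noteq> {}"
    by (metis card.empty not_numeral_le_zero)
  then obtain y where y: "y \<in> X - {x}" "\<forall>u\<in>X - {x}. r y \<le> r u"
    using arg_min_if_finite[of "X - {x}" r] fin by (meson finite_Diff not_le)
  have "2 \<le> card (X - {x} - {y})"
    using card x y fin by (simp add: card_Diff_singleton_if)
  then have "2 * r y \<le> of_nat (card (X - {x} - {y})) * r y"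
    using nonneg y by (intro mult_right_mono) auto
  also have "\<dots> \<le> sum r (X - {x} - {y})"
    using y by (intro sum_bounded_below) auto
  also have "sum r X = r x + r y + sum r (X - {x} - {y})"
    using fin x y by (simp add: sum.remove[of X x] sum.remove[of "X - {x}" y])
  ultimately have "2 * (r x + r y) \<le> sum r X"
    using x y by auto
  moreover have "y \<in> X" "y \<noteq> x"
    using y by auto
  ultimately show ?thesis
    using x by metis
qed

lemma hollow_coupling_exists:
  fixes p q :: "'a \<Rightarrow> real"
  assumes "finite X" "\<forall>u\<in>X. 0 \<le> p u \<and> 0 \<le> q u"
    and "sum p X = T" "sum q X = T" "\<forall>u\<in>X. p u + q u \<le> T"
  shows "\<exists>w. hollow_coupling X p q w"
  using assms
proof (induction "card X" arbitrary: X p q rule: less_induct)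
  case less
  note fin = less.prems(1) and nonneg = less.prems(2) and sum_p = less.prems(3)
    and sum_q = less.prems(4) and bound = less.prems(5)
  consider "card X = 0" | "card X = 1" | "card X = 2" | "card X = 3" | "4 \<le> card X"
    by linarith
  then show ?case
  proof cases
    case 1
    then show ?thesis
      using fin by (intro exI[of _ "\<lambda>u v. 0"]) (simp add: hollow_coupling_def)
  next
    case 2
    then obtain x where "X = {x}"
      by (auto simp: card_1_singleton_iff)
    moreover have "p x = 0" "q x = 0"
      using \<open>X = {x}\<close> nonneg sum_p sum_q bound by auto
    ultimately show ?thesis
      by (intro exI[of _ "\<lambda>u v. 0"]) (simp add: hollow_coupling_def)
  next
    case 3
    then obtain x y where X: "X = {x, y}" "x \<noteq> y"
      by (auto simp: card_2_iff)
    then have "q x = p y" "q y = p x"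
      using sum_p sum_q bound by auto
    then show ?thesis
      using X nonneg by (intro exI[of _ "\<lambda>u v. if u = x \<and> v = y then p x else if u = y \<and> v = x then p y else 0"])
        (auto simp: hollow_coupling_def)
  next
    case 4
    then obtain x y z where X: "X = {x, y, z}" "x \<noteq> y" "y \<noteq> z" "x \<noteq> z"
      by (auto simp: card_3_iff)
    moreover have "p x + p y + p z = T" "q x + q y + q z = T"
      using sum_p sum_q X by (simp_all add: add.assoc)
    ultimately show ?thesis
      using hollow_coupling_three[of x y z p q T] nonneg bound by blast
  next
    case 5
    \<comment> \<open>Merging the two indices with the smallest p + q keeps the bound p + q \<le> T.\<close>
    obtain x y where xy: "x \<in> X" "y \<in> X" "x \<noteq> y"
      and small: "2 * ((p x + q x) + (p y + q y)) \<le> sum (\<lambda>u. p u + q u) X"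
      using exists_pair_sum_le_half[OF fin 5, of "\<lambda>u. p u + q u"] nonneg by auto
    define p' where "p' = p(x := p x + p y)"
    define q' where "q' = q(x := q x + q y)"
    have sum_merged: "sum (f(x := f x + f y)) (X - {y}) = sum f X" for f :: "'a \<Rightarrow> real"
      using fin xy by (simp add: sum.remove[of X y] sum.remove[of "X - {y}" x] algebra_simps)
    have "(p x + q x) + (p y + q y) \<le> T"
      using small sum_p sum_q by (simp add: sum.distrib)
    then have "\<forall>u\<in>X - {y}. p' u + q' u \<le> T"
      using bound by (auto simp: p'_def q'_def)
    moreover have "card (X - {y}) < card X"
      using fin xy(2) by (rule card_Diff1_less)
    moreover have "\<forall>u\<in>X - {y}. 0 \<le> p' u \<and> 0 \<le> q' u"
      using nonneg xy by (auto simp: p'_def q'_def)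
    moreover have "sum p' (X - {y}) = T" "sum q' (X - {y}) = T"
      using sum_p sum_q sum_merged by (simp_all add: p'_def q'_def)
    ultimately obtain w' where "hollow_coupling (X - {y}) p' q' w'"
      using less.hyps[of "X - {y}" p' q'] fin by blast
    then show ?thesis
      using hollow_coupling_split[OF fin xy] nonneg xy unfolding p'_def q'_def by blast
  qed
qed

definition link_time :: "nat \<Rightarrow> (hd_state \<Rightarrow> real) \<Rightarrow> nat \<Rightarrow> nat \<Rightarrow> real" where
  "link_time N lam i j = (\<Sum>s\<in>{s\<in>hd_states N. link_active s i j}. lam s)"

definition diamond_flow :: "nat \<Rightarrow> (nat \<Rightarrow> real) \<Rightarrow> (nat \<Rightarrow> real) \<Rightarrow> (hd_state \<Rightarrow> real) \<Rightarrow> real" where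
  "diamond_flow N l r lam =
     (\<Sum>i=1..N. min (link_time N lam 0 i * l i) (link_time N lam i (N + 1) * r i))"

lemma finite_hd_states: "finite (hd_states N)"
proof -
  define F where "F = {f :: nat \<Rightarrow> nat set. \<forall>i. (i \<in> {0..N + 1} \<longrightarrow> f i \<in> Pow {0..N + 1})
                                             \<and> (i \<notin> {0..N + 1} \<longrightarrow> f i = {})}"
  have "finite F"
    unfolding F_def by (intro finite_set_of_finite_funs) auto
  moreover have "hd_states N \<subseteq> F \<times> F"
    unfolding hd_states_def F_def by fastforce
  ultimately show ?thesis
    by (meson finite_SigmaI finite_subset)
qed

lemma hd_state_node_sets:
  assumes "s \<in> hd_states N"
  shows "finite (fst s i)" "card (fst s i) \<le> 1" "finite (snd s i)" "card (snd s i) \<le> 1"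
proof -
  have "fst s i \<subseteq> {0..N + 1} \<and> snd s i \<subseteq> {0..N + 1} \<and> card (fst s i) \<le> 1 \<and> card (snd s i) \<le> 1"
  proof (cases "i \<le> N + 1")
    case True
    then show ?thesis
      using assms by (cases s) (fastforce simp: hd_states_def)
  next
    case False
    then show ?thesis
      using assms by (cases s) (simp add: hd_states_def)
  qed
  then show "finite (fst s i)" "card (fst s i) \<le> 1" "finite (snd s i)" "card (snd s i) \<le> 1"
    by (auto intro: finite_subset)
qed

lemma hd_state_relay_half_duplex:
  assumes "s \<in> hd_states N" "i \<in> {1..N}"
  shows "fst s i = {} \<or> snd s i = {}"
proof -
  have "card (fst s i) + card (snd s i) \<le> 1"
    using assms by (cases s) (auto simp: hd_states_def)
  then have "card (fst s i) = 0 \<or> card (snd s i) = 0"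
    by arith
  then show ?thesis
    using hd_state_node_sets(1,3)[OF assms(1)] by auto
qed

lemma card_link_targets_le_1:
  assumes "s \<in> hd_states N"
  shows "card {j\<in>J. link_active s i j} \<le> 1"
proof -
  have "{j\<in>J. link_active s i j} \<subseteq> fst s i"
    by (auto simp: link_active_def)
  then show ?thesis
    using hd_state_node_sets(1,2)[OF assms, of i] card_mono order_trans by blast
qed

lemma card_link_sources_le_1:
  assumes "s \<in> hd_states N"
  shows "card {i\<in>I. link_active s i j} \<le> 1"
proof -
  have "{i\<in>I. link_active s i j} \<subseteq> snd s j"
    by (auto simp: link_active_def)
  then show ?thesis
    using hd_state_node_sets(3,4)[OF assms, of j] card_mono order_trans by blast
qed

lemma sum_sum_filter_le_of_card_le_1:
  fixes lam :: "'s \<Rightarrow> real"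
  assumes "finite H" "finite I" "\<forall>s\<in>H. 0 \<le> lam s" "\<forall>s\<in>H. card {i\<in>I. P s i} \<le> 1"
  shows "(\<Sum>i\<in>I. \<Sum>s\<in>{s\<in>H. P s i}. lam s) \<le> sum lam H"
proof -
  have "(\<Sum>i\<in>I. \<Sum>s\<in>{s\<in>H. P s i}. lam s) = (\<Sum>s\<in>H. \<Sum>i\<in>I. if P s i then lam s else 0)"
    using assms by (simp add: sum.inter_filter sum.swap[of _ I])
  also have "\<dots> = (\<Sum>s\<in>H. lam s * card {i\<in>I. P s i})"
    using assms by (intro sum.cong) (auto simp: sum.If_cases Int_def)
  also have "\<dots> \<le> (\<Sum>s\<in>H. lam s)"
    using assms by (intro sum_mono) (simp add: mult_left_le)
  finally show ?thesis .
qed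

lemma
  assumes "lam \<in> prob_vectors N"
  shows link_time_nonneg: "0 \<le> link_time N lam i j"
    and sum_link_time_from_le_1: "finite J \<Longrightarrow> (\<Sum>j\<in>J. link_time N lam i j) \<le> 1"
    and sum_link_time_to_le_1: "finite I \<Longrightarrow> (\<Sum>i\<in>I. link_time N lam i j) \<le> 1"
    and relay_link_times_le_1: "i \<in> {1..N} \<Longrightarrow> link_time N lam 0 i + link_time N lam i (N + 1) \<le> 1"
proof -
  have nonneg: "\<forall>s\<in>hd_states N. 0 \<le> lam s" and total: "sum lam (hd_states N) = 1"
    using assms by (auto simp: prob_vectors_def)
  show "0 \<le> link_time N lam i j"
    unfolding link_time_def using nonneg by (auto intro: sum_nonneg)
  show "(\<Sum>j\<in>J. link_time N lam i j) \<le> 1" if "finite J"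
    using sum_sum_filter_le_of_card_le_1[OF finite_hd_states that nonneg, of "\<lambda>s j. link_active s i j"]
      card_link_targets_le_1 total
    unfolding link_time_def by simp
  show "(\<Sum>i\<in>I. link_time N lam i j) \<le> 1" if "finite I"
    using sum_sum_filter_le_of_card_le_1[OF finite_hd_states that nonneg, of "\<lambda>s i. link_active s i j"]
      card_link_sources_le_1 total
    unfolding link_time_def by simp
  assume i: "i \<in> {1..N}"
  have "{s\<in>hd_states N. link_active s 0 i} \<inter> {s\<in>hd_states N. link_active s i (N + 1)} = {}"
    using hd_state_relay_half_duplex[OF _ i] by (auto simp: link_active_def)
  then have "link_time N lam 0 i + link_time N lam i (N + 1)
      = sum lam ({s\<in>hd_states N. link_active s 0 i} \<union> {s\<in>hd_states N. link_active s i (N + 1)})"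
    unfolding link_time_def by (simp add: finite_hd_states sum.union_disjoint)
  also have "\<dots> \<le> sum lam (hd_states N)"
    using nonneg finite_hd_states by (intro sum_mono2) auto
  finally show "link_time N lam 0 i + link_time N lam i (N + 1) \<le> 1"
    using total by simp
qed

lemma sum_min_eq_Min_splits:
  fixes f g :: "'a \<Rightarrow> 'b :: {ordered_comm_monoid_add, linorder}"
  assumes "finite I"
  shows "(\<Sum>i\<in>I. min (f i) (g i)) = Min ((\<lambda>S. (\<Sum>i\<in>I - S. f i) + (\<Sum>i\<in>S. g i)) ` Pow I)"
proof (rule Min_eqI[symmetric])
  have split: "(\<Sum>i\<in>I. min (f i) (g i)) = (\<Sum>i\<in>I - S. min (f i) (g i)) + (\<Sum>i\<in>S. min (f i) (g i))"
    if "S \<subseteq> I" for S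
    using assms that by (simp add: sum.subset_diff)
  show "finite ((\<lambda>S. (\<Sum>i\<in>I - S. f i) + (\<Sum>i\<in>S. g i)) ` Pow I)"
    using assms by simp
  show "(\<Sum>i\<in>I. min (f i) (g i)) \<le> c" if "c \<in> (\<lambda>S. (\<Sum>i\<in>I - S. f i) + (\<Sum>i\<in>S. g i)) ` Pow I" for c
    using that split by (auto intro!: add_mono sum_mono)
  define S where "S = {i\<in>I. g i \<le> f i}"
  have "S \<subseteq> I"
    by (auto simp: S_def)
  have "(\<Sum>i\<in>I. min (f i) (g i)) = (\<Sum>i\<in>I - S. f i) + (\<Sum>i\<in>S. g i)"
    unfolding split[OF \<open>S \<subseteq> I\<close>]
    by (intro arg_cong2[where f = "(+)"] sum.cong) (auto simp: S_def)
  then show "(\<Sum>i\<in>I. min (f i) (g i)) \<in> (\<lambda>S. (\<Sum>i\<in>I - S. f i) + (\<Sum>i\<in>S. g i)) ` Pow I"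
    using \<open>S \<subseteq> I\<close> by blast
qed

lemma diamond_cut_value:
  assumes "\<Omega> \<in> cuts N"
  shows "cut_value N (diamond_cap N l r) lam \<Omega> =
    (\<Sum>j\<in>{1..N} - \<Omega>. link_time N lam 0 j * l j) + (\<Sum>i\<in>\<Omega> - {0}. link_time N lam i (N + 1) * r i)"
proof -
  have \<Omega>: "0 \<in> \<Omega>" "\<Omega> \<subseteq> {0..N}" "finite \<Omega>"
    using assms finite_subset by (auto simp: cuts_def)
  define g where "g i j = link_time N lam i j * diamond_cap N l r j i" for i j
  have "cut_value N (diamond_cap N l r) lam \<Omega> = (\<Sum>i\<in>\<Omega>. \<Sum>j\<in>{0..N + 1} - \<Omega>. g i j)"
    by (simp add: cut_value_def g_def link_time_def)
  also have "\<dots> = (\<Sum>j\<in>{0..N + 1} - \<Omega>. g 0 j) + (\<Sum>i\<in>\<Omega> - {0}. \<Sum>j\<in>{0..N + 1} - \<Omega>. g i j)"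
    using \<Omega> by (simp add: sum.remove)
  also have "(\<Sum>j\<in>{0..N + 1} - \<Omega>. g 0 j) = (\<Sum>j\<in>({0..N + 1} - \<Omega>) \<inter> {1..N}. link_time N lam 0 j * l j)"
    by (simp add: sum.inter_restrict g_def diamond_cap_def if_distrib cong: if_cong)
  also have "({0..N + 1} - \<Omega>) \<inter> {1..N} = {1..N} - \<Omega>"
    by auto
  also have "(\<Sum>i\<in>\<Omega> - {0}. \<Sum>j\<in>{0..N + 1} - \<Omega>. g i j) = (\<Sum>i\<in>\<Omega> - {0}. link_time N lam i (N + 1) * r i)"
  proof (intro sum.cong refl)
    fix i assume "i \<in> \<Omega> - {0}"
    then have "i \<in> {1..N}"
      using \<Omega> by auto
    then have "(\<Sum>j\<in>{0..N + 1} - \<Omega>. g i j) = (\<Sum>j\<in>{0..N + 1} - \<Omega>. if j = N + 1 then link_time N lam i (N + 1) * r i else 0)"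
      by (intro sum.cong) (auto simp: g_def diamond_cap_def)
    also have "\<dots> = link_time N lam i (N + 1) * r i"
      using \<Omega> by (auto simp: sum.delta)
    finally show "(\<Sum>j\<in>{0..N + 1} - \<Omega>. g i j) = link_time N lam i (N + 1) * r i" .
  qed
  finally show ?thesis .
qed

lemma Min_diamond_cut_values:
  "Min (cut_value N (diamond_cap N l r) lam ` cuts N) = diamond_flow N l r lam"
proof -
  define F where "F S = (\<Sum>j\<in>{1..N} - S. link_time N lam 0 j * l j) + (\<Sum>i\<in>S. link_time N lam i (N + 1) * r i)"
    for S
  have "cut_value N (diamond_cap N l r) lam \<Omega> = F (\<Omega> - {0})" if "\<Omega> \<in> cuts N" for \<Omega>
  proof -
    have "{1..N} - (\<Omega> - {0}) = {1..N} - \<Omega>"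
      by auto
    then show ?thesis
      by (simp add: diamond_cut_value[OF that] F_def)
  qed
  then have "cut_value N (diamond_cap N l r) lam ` cuts N = F ` ((\<lambda>\<Omega>. \<Omega> - {0}) ` cuts N)"
    by (simp add: image_image cong: image_cong)
  also have "(\<lambda>\<Omega>. \<Omega> - {0}) ` cuts N = Pow {1..N}"
  proof (intro equalityI subsetI)
    fix S assume "S \<in> Pow {1..N}"
    then show "S \<in> (\<lambda>\<Omega>. \<Omega> - {0}) ` cuts N"
      by (intro image_eqI[of _ _ "insert 0 S"]) (auto simp: cuts_def)
  qed (auto simp: cuts_def)
  moreover have "diamond_flow N l r lam = Min (F ` Pow {1..N})"
    unfolding diamond_flow_def F_def by (rule sum_min_eq_Min_splits) simp
  ultimately show ?thesis
    by simp
qed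

text \<open>The source transmits to relay u and relay v transmits to the destination; an index outside
  [1:N] leaves the corresponding hop silent.\<close>
definition pair_state :: "nat \<Rightarrow> nat \<Rightarrow> nat \<Rightarrow> hd_state" where
  "pair_state N u v =
     ((\<lambda>k. if k = 0 \<and> u \<in> {1..N} then {u} else if k = v \<and> v \<in> {1..N} then {N + 1} else {}),
      (\<lambda>k. if k = u \<and> u \<in> {1..N} then {0} else if k = N + 1 \<and> v \<in> {1..N} then {v} else {}))"

lemma pair_state_in_hd_states: "u \<noteq> v \<Longrightarrow> pair_state N u v \<in> hd_states N"
  by (auto simp: pair_state_def hd_states_def)

lemma link_active_pair_state_source:
  "i \<in> {1..N} \<Longrightarrow> link_active (pair_state N u v) 0 i \<longleftrightarrow> u = i"
  by (auto simp: pair_state_def link_active_def)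

lemma link_active_pair_state_destination:
  "i \<in> {1..N} \<Longrightarrow> link_active (pair_state N u v) i (N + 1) \<longleftrightarrow> v = i"
  by (auto simp: pair_state_def link_active_def)

lemma sum_filter_fibers:
  assumes "finite P" "finite H" "f ` P \<subseteq> H"
  shows "(\<Sum>s\<in>{s\<in>H. Q s}. \<Sum>z\<in>{z\<in>P. f z = s}. W z) = (\<Sum>z\<in>{z\<in>P. Q (f z)}. W z)"
proof -
  have "(\<Sum>s\<in>{s\<in>H. Q s}. \<Sum>z\<in>{z\<in>P. f z = s}. W z)
      = (\<Sum>s\<in>{s\<in>H. Q s}. \<Sum>z\<in>{z \<in> {z\<in>P. Q (f z)}. f z = s}. W z)"
    by (intro sum.cong) auto
  also have "\<dots> = (\<Sum>z\<in>{z\<in>P. Q (f z)}. W z)"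
    by (rule sum.group) (use assms in auto)
  finally show ?thesis .
qed

lemma schedule_of_hollow_coupling:
  assumes coupling: "hollow_coupling {0..N + 1} p q w" and total: "sum p {0..N + 1} = 1"
  shows "\<exists>lam\<in>prob_vectors N. \<forall>i\<in>{1..N}. link_time N lam 0 i = p i \<and> link_time N lam i (N + 1) = q i"
proof -
  define X where "X = {0..N + 1}"
  define P where "P = {(u, v) \<in> X \<times> X. u \<noteq> v}"
  define lam where "lam s = (\<Sum>(u, v)\<in>{(u, v) \<in> P. pair_state N u v = s}. w u v)" for s
  have w: "\<forall>u v. 0 \<le> w u v" "\<forall>u. w u u = 0" "\<forall>u\<in>X. (\<Sum>v\<in>X. w u v) = p u"
    "\<forall>v\<in>X. (\<Sum>u\<in>X. w u v) = q v"
    using coupling by (auto simp: hollow_coupling_def X_def)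
  have finite_P: "finite P"
    by (rule finite_subset[of P "X \<times> X"]) (auto simp: P_def X_def)
  have P_states: "(\<lambda>(u, v). pair_state N u v) ` P \<subseteq> hd_states N"
    by (auto simp: P_def pair_state_in_hd_states)
  have link_time_lam: "link_time N lam i j = (\<Sum>(u, v)\<in>{(u, v) \<in> P. link_active (pair_state N u v) i j}. w u v)"
    for i j
    unfolding link_time_def lam_def
    using sum_filter_fibers[OF finite_P finite_hd_states P_states, where Q="\<lambda>s. link_active s i j" and W="\<lambda>(u, v). w u v"]
    by (simp add: split_def)
  have "sum lam (hd_states N) = (\<Sum>(u, v)\<in>P. w u v)"
    unfolding lam_def
    using sum_filter_fibers[OF finite_P finite_hd_states P_states, where Q="\<lambda>_. True" and W="\<lambda>(u, v). w u v"]
    by (simp add: split_def)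
  also have "\<dots> = (\<Sum>(u, v)\<in>X \<times> X. w u v)"
    by (rule sum.mono_neutral_left) (use w in \<open>auto simp: P_def X_def\<close>)
  also have "\<dots> = 1"
    using w total by (simp add: sum.cartesian_product[symmetric] X_def)
  finally have "lam \<in> prob_vectors N"
    using w by (auto simp: prob_vectors_def lam_def split_def intro: sum_nonneg)
  moreover have "link_time N lam 0 i = p i \<and> link_time N lam i (N + 1) = q i" if i: "i \<in> {1..N}" for i
  proof
    have iX: "i \<in> X" and finite_X: "finite X"
      using i by (auto simp: X_def)
    have "{(u, v) \<in> P. link_active (pair_state N u v) 0 i} = Pair i ` (X - {i})"
      using i iX by (auto simp: P_def link_active_pair_state_source)
    then have "link_time N lam 0 i = (\<Sum>v\<in>X - {i}. w i v)"
      by (simp add: link_time_lam sum.reindex inj_on_def)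
    also have "\<dots> = p i"
      using w iX sum.remove[OF finite_X iX, of "w i"] by simp
    finally show "link_time N lam 0 i = p i" .
    have "{(u, v) \<in> P. link_active (pair_state N u v) i (N + 1)} = (\<lambda>u. (u, i)) ` (X - {i})"
      using iX link_active_pair_state_destination[OF i] by (auto simp: P_def)
    then have "link_time N lam i (N + 1) = (\<Sum>u\<in>X - {i}. w u i)"
      by (simp add: link_time_lam sum.reindex inj_on_def)
    also have "\<dots> = q i"
      using w iX sum.remove[OF finite_X iX, of "\<lambda>u. w u i"] by simp
    finally show "link_time N lam i (N + 1) = q i" .
  qed
  ultimately show ?thesis
    by blast
qed

lemma cSUP_eq_of_dominance:
  fixes f g :: "_ \<Rightarrow> 'c :: conditionally_complete_lattice"
  assumes "A \<noteq> {}" "B \<noteq> {}" "bdd_above (g ` B)"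
    and "\<forall>a\<in>A. \<exists>b\<in>B. f a \<le> g b" and "\<forall>b\<in>B. \<exists>a\<in>A. g b \<le> f a"
  shows "(SUP a\<in>A. f a) = (SUP b\<in>B. g b)"
proof -
  obtain M where "\<forall>b\<in>B. g b \<le> M"
    using assms(3) by (auto simp: bdd_above_def)
  then have "bdd_above (f ` A)"
    using assms(4) by (meson bdd_above.I2 order_trans)
  then show ?thesis
    using assms by (intro antisym cSUP_mono) auto
qed

lemma prob_vectors_nonempty: "prob_vectors N \<noteq> {}"
proof -
  define silent where "silent = ((\<lambda>_. {}, \<lambda>_. {}) :: hd_state)"
  have "silent \<in> hd_states N"
    by (simp add: silent_def hd_states_def)
  then have "(\<lambda>s. if s = silent then 1 else 0) \<in> prob_vectors N"
    by (simp add: prob_vectors_def finite_hd_states sum.delta)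
  then show ?thesis
    by blast
qed

lemma lp_feasible_nonempty: "lp_feasible N l r \<noteq> {}"
proof -
  have "(\<lambda>_. 0, \<lambda>_. 0) \<in> lp_feasible N l r"
    by (simp add: lp_feasible_def)
  then show ?thesis
    by blast
qed

lemma bdd_above_lp_objective:
  assumes "\<forall>i\<in>{1..N}. 0 \<le> l i"
  shows "bdd_above ((\<lambda>ab. \<Sum>i=1..N. fst ab i * l i) ` lp_feasible N l r)"
proof (rule bdd_aboveI2)
  fix ab assume ab: "ab \<in> lp_feasible N l r"
  have "fst ab i * l i \<le> l i" if "i \<in> {1..N}" for i
  proof -
    have "0 \<le> fst ab i" "fst ab i \<le> 1"
      using ab that by (force simp: lp_feasible_def)+
    then show ?thesis
      using assms that by (simp add: mult_left_le_one_le)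
  qed
  then show "(\<Sum>i=1..N. fst ab i * l i) \<le> (\<Sum>i=1..N. l i)"
    by (rule sum_mono)
qed

lemma sum_source_relays_destination:
  fixes N :: nat
  shows "sum f {0..N + 1} = f 0 + sum f {1..N} + f (N + 1)"
proof -
  have "{0..N + 1} = insert 0 (insert (N + 1) {1..N})"
    by auto
  then show ?thesis
    by (simp add: ac_simps)
qed

lemma lp_feasible_realizable:
  assumes "(a, b) \<in> lp_feasible N l r"
  shows "\<exists>lam\<in>prob_vectors N. \<forall>i\<in>{1..N}. link_time N lam 0 i = a i \<and> link_time N lam i (N + 1) = b i"
proof -
  have ab: "\<forall>i\<in>{1..N}. 0 \<le> a i \<and> 0 \<le> b i" "sum a {1..N} \<le> 1" "sum b {1..N} \<le> 1"
    "\<forall>i\<in>{1..N}. a i + b i \<le> 1"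
    using assms by (auto simp: lp_feasible_def)
  then have "0 \<le> sum a {1..N}" "0 \<le> sum b {1..N}"
    by (auto intro: sum_nonneg)
  \<comment> \<open>p and q are the laws of the relay served by the source and of the relay serving the
      destination, with 0 and N + 1 standing for silence; the zero diagonal of a coupling is the
      half-duplex constraint.\<close>
  define p where "p u = (if u \<in> {1..N} then a u else if u = 0 then 1 - sum a {1..N} else 0)" for u
  define q where "q u = (if u \<in> {1..N} then b u else if u = N + 1 then 1 - sum b {1..N} else 0)" for u
  have "sum p {1..N} = sum a {1..N}" "sum q {1..N} = sum b {1..N}"
    by (auto simp: p_def q_def intro: sum.cong)
  then have "sum p {0..N + 1} = 1" "sum q {0..N + 1} = 1"
    unfolding sum_source_relays_destination by (simp_all add: p_def q_def)
  moreover have "\<forall>u\<in>{0..N + 1}. 0 \<le> p u \<and> 0 \<le> q u" "\<forall>u\<in>{0..N + 1}. p u + q u \<le> 1"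
    using ab \<open>0 \<le> sum a {1..N}\<close> \<open>0 \<le> sum b {1..N}\<close> by (auto simp: p_def q_def)
  ultimately obtain w where "hollow_coupling {0..N + 1} p q w"
    using hollow_coupling_exists[of "{0..N + 1}" p q 1] by auto
  then show ?thesis
    using schedule_of_hollow_coupling[of N p q w] \<open>sum p {0..N + 1} = 1\<close>
    by (simp add: p_def q_def)
qed

lemma lp_objective_le_diamond_flow:
  assumes "ab \<in> lp_feasible N l r"
  shows "\<exists>lam\<in>prob_vectors N. (\<Sum>i=1..N. fst ab i * l i) \<le> diamond_flow N l r lam"
proof -
  obtain a b where ab: "ab = (a, b)"
    by fastforce
  then obtain lam where lam: "lam \<in> prob_vectors N"
    "\<forall>i\<in>{1..N}. link_time N lam 0 i = a i \<and> link_time N lam i (N + 1) = b i"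
    using lp_feasible_realizable assms by blast
  have "\<forall>i\<in>{1..N}. a i * l i = b i * r i"
    using assms ab by (simp add: lp_feasible_def)
  then have "(\<Sum>i=1..N. fst ab i * l i) = diamond_flow N l r lam"
    unfolding ab diamond_flow_def using lam(2) by (intro sum.cong refl) simp
  then show ?thesis
    using lam(1) by auto
qed

lemma diamond_flow_le_lp_objective:
  assumes l: "\<forall>i\<in>{1..N}. 0 < l i" and r: "\<forall>i\<in>{1..N}. 0 < r i" and lam: "lam \<in> prob_vectors N"
  shows "\<exists>ab\<in>lp_feasible N l r. diamond_flow N l r lam \<le> (\<Sum>i=1..N. fst ab i * l i)"
proof -
  define m where "m i = min (link_time N lam 0 i * l i) (link_time N lam i (N + 1) * r i)" for i
  define a where "a i = m i / l i" for i
  define b where "b i = m i / r i" for i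
  have ab: "a i * l i = m i" "b i * r i = m i" "0 \<le> a i" "a i \<le> link_time N lam 0 i"
    "0 \<le> b i" "b i \<le> link_time N lam i (N + 1)" if "i \<in> {1..N}" for i
  proof -
    have pos: "0 < l i" "0 < r i"
      using l r that by auto
    have "0 \<le> m i"
      using pos link_time_nonneg[OF lam] by (simp add: m_def)
    with pos show "a i * l i = m i" "b i * r i = m i" "0 \<le> a i" "a i \<le> link_time N lam 0 i"
      "0 \<le> b i" "b i \<le> link_time N lam i (N + 1)"
      by (simp_all add: a_def b_def divide_le_eq) (simp_all add: m_def)
  qed
  have "sum a {1..N} \<le> sum (link_time N lam 0) {1..N}"
    using ab(4) by (rule sum_mono)
  also have "\<dots> \<le> 1"
    using sum_link_time_from_le_1[OF lam] by simp
  moreover have "sum b {1..N} \<le> sum (\<lambda>i. link_time N lam i (N + 1)) {1..N}"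
    using ab(6) by (rule sum_mono)
  moreover have "\<dots> \<le> 1"
    using sum_link_time_to_le_1[OF lam] by simp
  moreover have "a i + b i \<le> 1" if "i \<in> {1..N}" for i
    using add_mono[OF ab(4,6)[OF that]] relay_link_times_le_1[OF lam that] by linarith
  ultimately have "(a, b) \<in> lp_feasible N l r"
    using ab(1-3,5) by (auto simp: lp_feasible_def)
  moreover have "diamond_flow N l r lam = (\<Sum>i=1..N. a i * l i)"
    unfolding diamond_flow_def using ab(1) by (intro sum.cong refl) (simp add: m_def)
  ultimately show ?thesis
    by force
qed

theorem mainTheorem6:
  fixes N :: nat and l r :: "nat \<Rightarrow> real"
  assumes "\<forall>i\<in>{1..N}. l i > 0" and "\<forall>i\<in>{1..N}. r i > 0"
  shows "C_cs_iid N (diamond_cap N l r) = lp_value N l r"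
proof -
  have "C_cs_iid N (diamond_cap N l r) = (SUP lam\<in>prob_vectors N. diamond_flow N l r lam)"
    by (simp add: C_cs_iid_def Min_diamond_cut_values)
  also have "\<dots> = lp_value N l r"
    unfolding lp_value_def
  proof (rule cSUP_eq_of_dominance[OF prob_vectors_nonempty lp_feasible_nonempty])
    show "bdd_above ((\<lambda>ab. \<Sum>i=1..N. fst ab i * l i) ` lp_feasible N l r)"
      using assms(1) by (intro bdd_above_lp_objective) auto
    show "\<forall>lam\<in>prob_vectors N. \<exists>ab\<in>lp_feasible N l r. diamond_flow N l r lam \<le> (\<Sum>i=1..N. fst ab i * l i)"
      using diamond_flow_le_lp_objective[OF assms] by blast
    show "\<forall>ab\<in>lp_feasible N l r. \<exists>lam\<in>prob_vectors N. (\<Sum>i=1..N. fst ab i * l i) \<le> diamond_flow N l r lam"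
      using lp_objective_le_diamond_flow by blast
  qed
  finally show ?thesis .
qed

end
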